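(* Let $\mathcal{N}>0$ be real, $n\ge0$ an integer, and put $\nu=\mathcal{N}+\tfrac12-n$. Then \[ \mathcal{H}_{n}^{\mathcal{N}}\!\left(X\sqrt{\mathcal{N}}\right)=\alpha_{n,\nu}\,n!\left(\frac{\nu}{\mathcal{N}}\right)^{\frac{n}{2}}\left(1+X^{2}\right)^{\frac{n}{2}}\,\mathcal{C}_{n}^{\nu}\!\left(\frac{X\sqrt{\nu}}{\sqrt{1+X^{2}}}\right), \qquad \alpha_{n,\nu}=\frac{(2\nu)_n}{2^n\,n!\,(\nu+\frac12)_n}. \]
   Context: $(a)_n=a(a+1)\cdots(a+n-1)$ denotes the Pochhammer symbol. For $\mathcal{N}>0$ and integer $n\ge0$, the Cari\~{n}ena polynomial with positive parameter is \[ \mathcal{H}_n^{\mathcal{N}}(X)=(-1)^n\left(1+\frac{X^2}{\mathcal{N}}\right)^{\mathcal{N}+\frac12}\frac{d^n}{dX^n}\left(1+\frac{X^2}{\mathcal{N}}\right)^{n-\mathcal{N}-\frac12}. \] For a real parameter $\nu\neq0$, the Cari\~{n}ena polynomial with parameter $-\nu$ is \[ \mathcal{C}_n^{\nu}(X)=(-1)^n\left(1-\frac{X^2}{\nu}\right)^{\frac12-\nu}\frac{d^n}{dX^n}\left(1-\frac{X^2}{\nu}\right)^{n+\nu-\frac12}. \] Both sides of the claimed identity are regarded as functions (polynomial expressions) in $X$. *)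

theory Defs
  imports "HOL-Analysis.Analysis" "HOL-Computational_Algebra.Polynomial"
begin

definition carinena_H :: "nat \<Rightarrow> real \<Rightarrow> real \<Rightarrow> real" where
  "carinena_H n N X = (-1) ^ n * (1 + X\<^sup>2 / N) powr (N + 1/2)
     * (deriv ^^ n) (\<lambda>t. (1 + t\<^sup>2 / N) powr (real n - N - 1/2)) X"

text \<open>Carinena polynomial with parameter -nu (as a real function of X, meaningful where
  1 - X^2/nu > 0).\<close>
definition carinena_C :: "nat \<Rightarrow> real \<Rightarrow> real \<Rightarrow> real" where
  "carinena_C n \<nu> X = (-1) ^ n * (1 - X\<^sup>2 / \<nu>) powr (1/2 - \<nu>)
     * (deriv ^^ n) (\<lambda>t. (1 - t\<^sup>2 / \<nu>) powr (real n + \<nu> - 1/2)) X"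

text \<open>The polynomial expression of carinena_C: the polynomial agreeing with it on its
  natural domain {Y. 1 - Y^2/nu > 0} (an infinite set when nu is nonzero).\<close>
definition carinena_C_poly :: "nat \<Rightarrow> real \<Rightarrow> real poly" where
  "carinena_C_poly n \<nu> = (THE p. \<forall>Y. 0 < 1 - Y\<^sup>2 / \<nu> \<longrightarrow> poly p Y = carinena_C n \<nu> Y)"

definition carinena_alpha :: "nat \<Rightarrow> real \<Rightarrow> real" where
  "carinena_alpha n \<nu> = pochhammer (2 * \<nu>) n / (2 ^ n * fact n * pochhammer (\<nu> + 1/2) n)"

end

theory Submission
  imports Defs
begin

text \<open>
  For every c, a the n-th derivative of (1 + c t^2)^a is R(t) (1 + c t^2)^(a - n) with a polynomial
  R = rodrigues_poly c a n given by a first-order recurrence in n, and rescaling t gives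
  R_{c s^2,a,n}(t) = s^n R_{c,a,n}(s t); this accounts for the factors sqrt N and sqrt nu (the latter
  possibly imaginary). Hence H_n^N(X sqrt N) is, up to sqrt N^n, the value at X of the diagonal
  sequence R_{1,n-b,n} with b = N + 1/2, whose exponent moves with n, while C_n^nu is R_{-1,N,n}.
  The substitution y = x / sqrt (1 + x^2) turns (1 + x^2)^(3/2) d/dx into d/dy, so
  sqrt (1 + x^2)^n R_{-1,N,n}(x / sqrt (1 + x^2)) obeys a recurrence in n with N fixed.
  Contiguous relations between the R_{1,a,n} show that the diagonal sequence obeys the same
  recurrence up to scalar factors, and these factors multiply up to alpha n!.
\<close>

section \<open>Ring homomorphisms acting on polynomials\<close>

locale idom_hom =
  fixes f :: "'a::idom \<Rightarrow> 'b::idom"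
  assumes hom_add: "f (x + y) = f x + f y"
    and hom_mult: "f (x * y) = f x * f y"
    and hom_one: "f 1 = 1"
begin

lemma hom_zero: "f 0 = 0"
  using hom_add[of 0 0] by (metis add_cancel_right_right)

lemma hom_diff: "f (x - y) = f x - f y"
  using hom_add[of "x - y" y] by (simp add: algebra_simps)

lemma hom_of_nat: "f (of_nat k) = of_nat k"
  by (induction k) (simp_all add: hom_zero hom_add hom_one)

lemma hom_numeral: "f (numeral k) = numeral k"
  using hom_of_nat[of "numeral k"] by simp

lemma hom_sum: "f (sum g A) = (\<Sum>i\<in>A. f (g i))"
  by (induction A rule: infinite_finite_induct) (simp_all add: hom_zero hom_add)

lemma hom_pochhammer: "f (pochhammer x n) = pochhammer (f x) n"
  by (induction n) (simp_all add: pochhammer_Suc hom_one hom_mult hom_add hom_of_nat)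

lemma map_poly_add: "map_poly f (p + q) = map_poly f p + map_poly f q"
  by (rule poly_eqI) (simp add: coeff_map_poly hom_zero hom_add)

lemma map_poly_diff: "map_poly f (p - q) = map_poly f p - map_poly f q"
  by (rule poly_eqI) (simp add: coeff_map_poly hom_zero hom_diff)

lemma map_poly_mult: "map_poly f (p * q) = map_poly f p * map_poly f q"
  by (rule poly_eqI) (simp add: coeff_map_poly hom_zero coeff_mult hom_sum hom_mult)

lemma map_poly_pderiv: "map_poly f (pderiv p) = pderiv (map_poly f p)"
  using hom_of_nat[of "Suc _"]
  by (intro poly_eqI) (simp add: coeff_map_poly hom_zero coeff_pderiv hom_mult)

lemma map_poly_const: "map_poly f [:c:] = [:f c:]"
  by (simp add: hom_zero map_poly_pCons)

lemma map_poly_monom_1_1: "map_poly f (monom 1 1) = monom 1 1"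
  by (simp add: hom_zero hom_one map_poly_monom)

lemma map_poly_of_nat: "map_poly f (of_nat k) = of_nat k"
  by (simp add: of_nat_poly hom_zero hom_of_nat map_poly_pCons)

lemma map_poly_numeral: "map_poly f (numeral k) = numeral k"
  by (simp add: numeral_poly hom_zero hom_numeral map_poly_pCons)

lemmas map_poly_simps = map_poly_add map_poly_diff map_poly_mult map_poly_pderiv map_poly_const
  map_poly_monom_1_1 map_poly_of_nat map_poly_numeral map_poly_1' hom_one power2_eq_square

end

interpretation const_poly: idom_hom "\<lambda>c::'a::idom. [:c:]"
  by unfold_locales (simp_all add: one_pCons)

lemmas const_poly_simps = const_poly.hom_add const_poly.hom_diff const_poly.hom_mult
  const_poly.hom_of_nat const_poly.hom_numeral const_poly.hom_zero const_poly.hom_one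

lemma idom_hom_of_real: "idom_hom (of_real :: real \<Rightarrow> complex)"
  by unfold_locales simp_all

lemma idom_hom_poly_eval: "idom_hom (\<lambda>q :: 'a::idom poly. poly q x)"
  by unfold_locales simp_all

lemma pderiv_monom_1_1: "pderiv (monom 1 1 :: 'a::idom poly) = 1"
  by (simp add: pderiv_monom one_pCons)

lemma pderiv_const: "pderiv [:c::'a::idom:] = 0"
  by (simp add: pderiv_pCons)

lemma pderiv_numeral: "pderiv (numeral k :: 'a::idom poly) = 0"
  by (simp add: numeral_poly pderiv_const)

lemmas pderiv_ring_simps = pderiv_mult pderiv_add pderiv_diff pderiv_minus power2_eq_square
  pderiv_monom_1_1 pderiv_const pderiv_of_nat pderiv_1 pderiv_0 pderiv_numeral

section \<open>Polynomial factors of higher derivatives of (1 + c t^2)^a\<close>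

fun rodrigues_poly :: "'a::idom \<Rightarrow> 'a \<Rightarrow> nat \<Rightarrow> 'a poly" where
  "rodrigues_poly c a 0 = 1"
| "rodrigues_poly c a (Suc n) = (1 + [:c:] * monom 1 1 ^ 2) * pderiv (rodrigues_poly c a n)
      + 2 * [:c * (a - of_nat n):] * monom 1 1 * rodrigues_poly c a n"

lemma rodrigues_poly_one_Suc:
  "rodrigues_poly 1 a (Suc n) = (1 + monom 1 1 ^ 2) * pderiv (rodrigues_poly 1 a n)
      + 2 * ([:a:] - of_nat n) * monom 1 1 * rodrigues_poly 1 a n"
  by (simp only: rodrigues_poly.simps const_poly_simps) algebra

lemma rodrigues_poly_one_Suc_Suc_lower:
  "rodrigues_poly 1 a (Suc (Suc n)) = 2 * [:a:] * monom 1 1 * rodrigues_poly 1 (a - 1) (Suc n)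
      + 2 * [:a:] * of_nat (Suc n) * (1 + monom 1 1 ^ 2) * rodrigues_poly 1 (a - 1) n"
proof (induction n)
  case 0
  show ?case
    by (simp only: rodrigues_poly_one_Suc rodrigues_poly.simps(1) pderiv_ring_simps const_poly_simps
        of_nat_0 of_nat_Suc) algebra
next
  case (Suc n)
  have lower: "rodrigues_poly 1 (a - 1) (Suc n) = (1 + monom 1 1 ^ 2) * pderiv (rodrigues_poly 1 (a - 1) n)
      + 2 * ([:a:] - 1 - of_nat n) * monom 1 1 * rodrigues_poly 1 (a - 1) n"
    by (simp only: rodrigues_poly_one_Suc const_poly_simps)
  show ?case
    unfolding rodrigues_poly_one_Suc[of a "Suc (Suc n)"] Suc.IH
      rodrigues_poly_one_Suc[of "a - 1" "Suc n"]
    by (simp only: pderiv_ring_simps const_poly_simps of_nat_Suc) (use lower in algebra)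
qed

lemma rodrigues_poly_one_three_term:
  "rodrigues_poly 1 a (Suc (Suc m)) = - 2 * (of_nat m + 1 - [:a:]) * monom 1 1 * rodrigues_poly 1 a (Suc m)
      - (of_nat m + 1) * (of_nat m - 2 * [:a:]) * (1 + monom 1 1 ^ 2) * rodrigues_poly 1 a m"
proof (induction m)
  case 0
  show ?case
    by (simp only: rodrigues_poly_one_Suc rodrigues_poly.simps(1) pderiv_ring_simps of_nat_0 of_nat_Suc)
      algebra
next
  case (Suc m)
  have "pderiv (rodrigues_poly 1 a (Suc (Suc m))) = - 2 * (of_nat m + 1 - [:a:])
        * (rodrigues_poly 1 a (Suc m) + monom 1 1 * pderiv (rodrigues_poly 1 a (Suc m)))
      - (of_nat m + 1) * (of_nat m - 2 * [:a:])
        * (2 * monom 1 1 * rodrigues_poly 1 a m + (1 + monom 1 1 ^ 2) * pderiv (rodrigues_poly 1 a m))"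
    unfolding Suc.IH by (simp only: pderiv_ring_simps) algebra
  then show ?case
    using Suc.IH rodrigues_poly_one_Suc[of a "Suc m"] rodrigues_poly_one_Suc[of a m]
    unfolding rodrigues_poly_one_Suc[of a "Suc (Suc m)"] of_nat_Suc
    by algebra
qed

lemma rodrigues_poly_one_contiguous:
  "(of_nat (Suc k) - 2 * [:a:] - 2) * rodrigues_poly 1 (a + 1) (Suc k)
     + 2 * ([:a:] + 1) * rodrigues_poly 1 a (Suc k)
     + 2 * ([:a:] + 1) * of_nat (Suc k) * monom 1 1 * rodrigues_poly 1 a k = 0"
proof (cases k)
  case 0
  show ?thesis
    unfolding 0
    by (simp only: rodrigues_poly_one_Suc rodrigues_poly.simps(1) pderiv_ring_simps const_poly_simps
        of_nat_0 of_nat_Suc) algebra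
next
  case (Suc j)
  show ?thesis
    unfolding Suc rodrigues_poly_one_Suc_Suc_lower[of "a + 1"] rodrigues_poly_one_three_term[of a]
    by (simp only: add_diff_cancel_right' const_poly_simps of_nat_Suc) algebra
qed

text \<open>
  The recurrence of ((1 + x^2)^(3/2) d/dx)^n (1 + x^2)^(-N) = H_n(x) (1 + x^2)^(n/2 - N).
\<close>

definition homog_rodrigues_step :: "'a::idom \<Rightarrow> nat \<Rightarrow> 'a poly \<Rightarrow> 'a poly" where
  "homog_rodrigues_step N n p = (1 + monom 1 1 ^ 2) * pderiv p + (of_nat n - 2 * [:N:]) * monom 1 1 * p"

fun homog_rodrigues_poly :: "'a::idom \<Rightarrow> nat \<Rightarrow> 'a poly" where
  "homog_rodrigues_poly N 0 = 1"
| "homog_rodrigues_poly N (Suc n) = homog_rodrigues_step N n (homog_rodrigues_poly N n)"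

lemma homog_rodrigues_step_const_mult:
  "homog_rodrigues_step N n ([:c:] * p) = [:c:] * homog_rodrigues_step N n p"
  unfolding homog_rodrigues_step_def by (simp only: pderiv_ring_simps) algebra

lemma rodrigues_poly_diagonal_Suc:
  fixes b N :: "'a::idom"
  assumes "2 * b = 2 * N + 1"
  shows "(2 * [:N:] - of_nat n) * rodrigues_poly 1 (of_nat (Suc n) - b) (Suc n)
    = (2 * [:N:] - 2 * of_nat n - 1) * homog_rodrigues_step N n (rodrigues_poly 1 (of_nat n - b) n)"
proof -
  define a where "a = of_nat n - b"
  have b: "2 * [:b:] = 2 * [:N:] + 1"
    using arg_cong[OF assms, of "\<lambda>c. [:c:]"] by (simp only: const_poly_simps)
  have a1: "of_nat (Suc n) - b = a + 1"
    by (simp add: a_def)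
  have a: "[:a:] = of_nat n - [:b:]"
    by (simp only: a_def const_poly_simps)
  show ?thesis
    unfolding a1 a_def[symmetric] homog_rodrigues_step_def
    using rodrigues_poly_one_contiguous[of n a] rodrigues_poly_one_Suc[of a n] b
    unfolding a of_nat_Suc by algebra
qed

lemma pochhammer_pred_Suc_mult:
  fixes x :: "'b::comm_ring_1"
  shows "(x + of_nat n) * pochhammer (x - 1) (Suc n) = x * (x - 1) * pochhammer (x + 1) n"
proof -
  have "pochhammer (x - 1) (Suc n) = (x - 1) * pochhammer x n"
    by (simp add: pochhammer_rec)
  moreover have "(x + of_nat n) * pochhammer x n = x * pochhammer (x + 1) n"
    by (metis pochhammer_rec pochhammer_rec')
  ultimately show ?thesis
    by (metis mult.assoc mult.left_commute)
qed

lemma rodrigues_poly_diagonal_eq_homog: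
  fixes b N :: "'a::idom"
  assumes b: "2 * b = 2 * N + 1"
    and N: "\<And>k. 2 * N \<noteq> of_nat k"
  shows "[:2 ^ n * pochhammer (N + 1 - of_nat n) n:] * rodrigues_poly 1 (of_nat n - b) n
       = [:pochhammer (2 * N + 1 - 2 * of_nat n) n:] * homog_rodrigues_poly N n"
proof (induction n)
  case 0
  show ?case by (simp add: pCons_one)
next
  case (Suc n)
  define P where "P = 2 ^ n * pochhammer (N + 1 - of_nat n) n"
  define Q where "Q = pochhammer (2 * N + 1 - 2 * of_nat n) n"
  have P: "2 ^ Suc n * pochhammer (N + 1 - of_nat (Suc n)) (Suc n) = 2 * (N - of_nat n) * P"
    unfolding P_def by (simp add: pochhammer_rec algebra_simps)
  have Q: "(2 * N - of_nat n) * pochhammer (2 * N + 1 - 2 * of_nat (Suc n)) (Suc n)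
      = 2 * (N - of_nat n) * (2 * N - 2 * of_nat n - 1) * Q"
    using pochhammer_pred_Suc_mult[of "2 * N - 2 * of_nat n" n]
    by (simp add: Q_def algebra_simps)
  have nz: "2 * [:N:] - of_nat n \<noteq> (0 :: 'a poly)"
  proof -
    have "2 * [:N:] - of_nat n = [:2 * N - of_nat n:]"
      by (simp only: const_poly_simps)
    with N[of n] show ?thesis
      by simp
  qed
  have "(2 * [:N:] - of_nat n) * ([:2 ^ Suc n * pochhammer (N + 1 - of_nat (Suc n)) (Suc n):]
        * rodrigues_poly 1 (of_nat (Suc n) - b) (Suc n))
     = [:2 * (N - of_nat n) * (2 * N - 2 * of_nat n - 1):]
        * homog_rodrigues_step N n ([:P:] * rodrigues_poly 1 (of_nat n - b) n)"
    unfolding P homog_rodrigues_step_const_mult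
    using rodrigues_poly_diagonal_Suc[OF b, of n]
    by (simp only: const_poly_simps) algebra
  also have "\<dots> = (2 * [:N:] - of_nat n) * ([:pochhammer (2 * N + 1 - 2 * of_nat (Suc n)) (Suc n):]
        * homog_rodrigues_poly N (Suc n))"
    unfolding P_def Suc.IH homog_rodrigues_step_const_mult homog_rodrigues_poly.simps
    using arg_cong[OF Q, of "\<lambda>c. [:c:]"] unfolding Q_def
    by (simp only: const_poly_simps) algebra
  finally show ?case
    using mult_left_cancel[OF nz] by blast
qed

context idom_hom
begin

lemma poly_map_poly: "poly (map_poly f p) (f x) = f (poly p x)"
  by (induction p) (simp_all add: hom_zero hom_add hom_mult map_poly_pCons)

lemma map_poly_rodrigues_poly: "map_poly f (rodrigues_poly c a n) = rodrigues_poly (f c) (f a) n"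
  by (induction n) (simp_all only: rodrigues_poly.simps map_poly_simps hom_mult hom_diff hom_of_nat)

lemma map_poly_homog_rodrigues_poly:
  "map_poly f (homog_rodrigues_poly N n) = homog_rodrigues_poly (f N) n"
  by (induction n) (simp_all only: homog_rodrigues_poly.simps homog_rodrigues_step_def map_poly_simps)

end

lemma rodrigues_poly_diagonal_eq_homog_real:
  fixes N :: real
  shows "[:2 ^ n * pochhammer (N + 1 - of_nat n) n:] * rodrigues_poly 1 (of_nat n - N - 1/2) n
       = [:pochhammer (2 * N + 1 - 2 * of_nat n) n:] * homog_rodrigues_poly N n"
proof -
  txt \<open>N is first an indeterminate, so that the factors 2 N - k can be cancelled.\<close>
  define M :: "real poly" where "M = [:0, 1:]"
  have M: "2 * M \<noteq> of_nat k" for k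
  proof
    assume "2 * M = of_nat k"
    then have "coeff (2 * M) 1 = coeff (of_nat k) 1" by simp
    then show False by (simp add: M_def numeral_poly of_nat_poly)
  qed
  have b: "2 * (M + [:1/2:]) = 2 * M + 1"
    by (simp add: M_def numeral_poly one_pCons)
  interpret eval: idom_hom "\<lambda>q :: real poly. poly q N"
    by (rule idom_hom_poly_eval)
  have "map_poly (\<lambda>q. poly q N) ([:2 ^ n * pochhammer (M + 1 - of_nat n) n:]
          * rodrigues_poly 1 (of_nat n - (M + [:1/2:])) n)
     = map_poly (\<lambda>q. poly q N) ([:pochhammer (2 * M + 1 - 2 * of_nat n) n:] * homog_rodrigues_poly M n)"
    by (simp only: rodrigues_poly_diagonal_eq_homog[OF b M])
  then show ?thesis
    by (simp only: eval.map_poly_simps eval.map_poly_rodrigues_poly eval.map_poly_homog_rodrigues_poly)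
      (simp add: M_def algebra_simps eval.hom_pochhammer)
qed

lemma rodrigues_poly_rescale:
  "rodrigues_poly (c * s ^ 2) a n = [:s ^ n:] * pcompose (rodrigues_poly c a n) ([:s:] * monom 1 1)"
proof (induction n)
  case 0
  show ?case by (simp add: pCons_one pcompose_1)
next
  case (Suc n)
  have pcompose_monom_1_1: "pcompose (monom 1 1) q = q" for q :: "'a poly"
    by (simp add: monom_altdef pcompose_pCons)
  have pcompose_of_nat: "pcompose (of_nat k) q = of_nat k" for k and q :: "'a poly"
    by (simp add: of_nat_poly)
  have pcompose_numeral: "pcompose (numeral k) q = numeral k" for k and q :: "'a poly"
    by (simp add: numeral_poly)
  have deriv: "pderiv (pcompose (rodrigues_poly c a n) ([:s:] * monom 1 1))
      = [:s:] * pcompose (pderiv (rodrigues_poly c a n)) ([:s:] * monom 1 1)"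
    by (simp only: pderiv_pcompose pderiv_ring_simps) algebra
  show ?case
    unfolding rodrigues_poly.simps(2)[of "c * s ^ 2"] Suc.IH
    by (simp only: rodrigues_poly.simps pcompose_add pcompose_mult pcompose_diff pcompose_const
        pcompose_monom_1_1 pcompose_of_nat pcompose_numeral pcompose_1 pderiv_ring_simps
        const_poly_simps power_Suc deriv) algebra
qed

lemma poly_rodrigues_poly_rescale:
  "poly (rodrigues_poly (c * s ^ 2) a n) x = s ^ n * poly (rodrigues_poly c a n) (s * x)"
  by (simp add: rodrigues_poly_rescale poly_pcompose poly_monom mult.commute)

lemma poly_rodrigues_poly_Suc:
  "poly (rodrigues_poly c a (Suc n)) t = (1 + c * t^2) * poly (pderiv (rodrigues_poly c a n)) t
      + 2 * c * (a - of_nat n) * t * poly (rodrigues_poly c a n) t"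
  by (simp add: poly_monom)

lemma higher_deriv_powr_quadratic:
  fixes c a :: real
  assumes S: "open S" and pos: "\<And>t. t \<in> S \<Longrightarrow> 0 < 1 + c * t^2" and "t \<in> S"
  shows "(deriv ^^ n) (\<lambda>t. (1 + c * t^2) powr a) t
           = poly (rodrigues_poly c a n) t * (1 + c * t^2) powr (a - real n)"
  using \<open>t \<in> S\<close>
proof (induction n arbitrary: t)
  case 0
  show ?case by simp
next
  case (Suc n)
  define g where "g = (\<lambda>t. poly (rodrigues_poly c a n) t * (1 + c * t^2) powr (a - real n))"
  define u where "u = 1 + c * t^2"
  have u: "u > 0"
    using pos[OF Suc.prems] by (simp add: u_def)
  have "eventually (\<lambda>x. (deriv ^^ n) (\<lambda>t. (1 + c * t^2) powr a) x = g x) (nhds t)"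
    using eventually_nhds_in_open[OF S Suc.prems] by eventually_elim (simp add: Suc.IH g_def)
  then have "(deriv ^^ Suc n) (\<lambda>t. (1 + c * t^2) powr a) t = deriv g t"
    by (simp add: deriv_cong_ev)
  also have "deriv g t = poly (pderiv (rodrigues_poly c a n)) t * u powr (a - real n)
      + poly (rodrigues_poly c a n) t * ((a - real n) * u powr (a - real n - 1) * (2 * c * t))"
  proof -
    have "((\<lambda>t. 1 + c * t^2) has_real_derivative (2 * c * t)) (at t)"
      by (auto intro!: derivative_eq_intros)
    from DERIV_mult[OF poly_DERIV DERIV_fun_powr[OF this pos[OF Suc.prems]]]
    show ?thesis
      unfolding g_def u_def by (rule DERIV_imp_deriv[OF DERIV_cong]) simp
  qed
  also have "u powr (a - real n) = u * u powr (a - real (Suc n))"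
    using u by (simp add: powr_mult_base)
  finally show ?case
    unfolding poly_rodrigues_poly_Suc u_def by (simp add: algebra_simps)
qed

lemma DERIV_sqrt_one_plus_square:
  "((\<lambda>x::real. sqrt (1 + x^2)) has_real_derivative x / sqrt (1 + x^2)) (at x)"
proof -
  have "0 < 1 + x^2"
    by (simp add: add_pos_nonneg)
  then show ?thesis
    by (auto intro!: derivative_eq_intros simp: field_simps)
qed

lemma DERIV_div_sqrt_one_plus_square:
  "((\<lambda>x::real. x / sqrt (1 + x^2)) has_real_derivative 1 / sqrt (1 + x^2) ^ 3) (at x)"
proof -
  define r where "r = sqrt (1 + x^2)"
  have r: "0 < r" "r^2 = 1 + x^2"
    by (simp_all add: r_def add_pos_nonneg)
  have "(1 * r - x * (x / r)) / r^2 = 1 / r ^ 3"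
    using r by (simp add: field_simps power2_eq_square power3_eq_cube)
  then show ?thesis
    using DERIV_divide[OF DERIV_ident DERIV_sqrt_one_plus_square, of x] r
    unfolding r_def by simp
qed

lemma poly_homog_rodrigues_poly:
  "poly (homog_rodrigues_poly N n) x
     = sqrt (1 + x^2) ^ n * poly (rodrigues_poly (-1) N n) (x / sqrt (1 + x^2))"
proof (induction n arbitrary: x)
  case 0
  show ?case by simp
next
  case (Suc n)
  define r where "r = sqrt (1 + x^2)"
  define R where "R = rodrigues_poly (-1) N n"
  have r: "0 < r" "r^2 = 1 + x^2"
    by (simp_all add: r_def add_pos_nonneg)
  have "poly (homog_rodrigues_poly N n) = (\<lambda>x. sqrt (1 + x^2) ^ n * poly R (x / sqrt (1 + x^2)))"
    using Suc.IH by (simp add: R_def fun_eq_iff)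
  moreover have "((\<lambda>x. sqrt (1 + x^2) ^ n * poly R (x / sqrt (1 + x^2))) has_real_derivative
      of_nat n * r ^ (n - 1) * (x / r) * poly R (x / r) + r ^ n * (poly (pderiv R) (x / r) * (1 / r ^ 3))) (at x)"
    unfolding r_def
    by (rule DERIV_cong[OF DERIV_mult[OF DERIV_power[OF DERIV_sqrt_one_plus_square]
          DERIV_chain2[OF poly_DERIV DERIV_div_sqrt_one_plus_square]]]) (simp add: algebra_simps)
  ultimately have "(poly (homog_rodrigues_poly N n) has_real_derivative
      of_nat n * r ^ (n - 1) * (x / r) * poly R (x / r) + r ^ n * (poly (pderiv R) (x / r) * (1 / r ^ 3))) (at x)"
    by simp
  then have "poly (pderiv (homog_rodrigues_poly N n)) x
      = of_nat n * r ^ (n - 1) * (x / r) * poly R (x / r) + r ^ n * (poly (pderiv R) (x / r) * (1 / r ^ 3))"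
    using DERIV_unique poly_DERIV by blast
  also have "of_nat n * r ^ (n - 1) * (x / r) = of_nat n * x * r ^ n / r^2"
    using r(1) by (cases n) (simp_all add: field_simps power2_eq_square)
  finally have deriv: "poly (pderiv (homog_rodrigues_poly N n)) x
      = r ^ n * (of_nat n * x * poly R (x / r) / r^2 + poly (pderiv R) (x / r) / r ^ 3)"
    by (simp add: algebra_simps)
  have val: "poly (homog_rodrigues_poly N n) x = r ^ n * poly R (x / r)"
    using Suc.IH by (simp add: r_def R_def)
  have "poly (homog_rodrigues_poly N (Suc n)) x
      = r^2 * poly (pderiv (homog_rodrigues_poly N n)) x
        + (of_nat n - 2 * N) * x * poly (homog_rodrigues_poly N n) x"
    by (simp add: homog_rodrigues_step_def poly_monom r(2))
  also have "\<dots> = r ^ n * (poly (pderiv R) (x / r) / r + 2 * (of_nat n - N) * x * poly R (x / r))"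
    unfolding deriv val using r(1) by (simp add: field_simps power2_eq_square power3_eq_cube)
  also have "\<dots> = r ^ Suc n * ((1 + (-1) * (x / r)^2) * poly (pderiv R) (x / r)
      + 2 * (-1) * (N - of_nat n) * (x / r) * poly R (x / r))"
  proof -
    have inv: "1 + (-1) * (x / r)^2 = 1 / r^2"
      using r(1) r(2)[symmetric] by (simp add: field_simps)
    show ?thesis
      unfolding inv using r(1) by (simp add: field_simps power2_eq_square)
  qed
  finally show ?case
    by (simp only: poly_rodrigues_poly_Suc R_def r_def)
qed

section \<open>The Carinena polynomials\<close>

lemma carinena_H_eq_rodrigues_poly:
  assumes "N > 0"
  shows "carinena_H n N x = (-1) ^ n * poly (rodrigues_poly (1 / N) (real n - N - 1/2) n) x"
proof -
  define u where "u = 1 + x^2 / N"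
  have pos: "0 < 1 + (1 / N) * t^2" for t
    using assms by (simp add: add_pos_nonneg)
  have u: "u > 0"
    using pos[of x] by (simp add: u_def)
  have "u powr (N + 1/2) * u powr (real n - N - 1/2 - real n) = 1"
    using u by (simp flip: powr_add)
  then show ?thesis
    using higher_deriv_powr_quadratic[OF open_UNIV pos, of x n "real n - N - 1/2"]
    by (simp add: carinena_H_def u_def)
qed

lemma carinena_H_rescaled:
  assumes "N > 0"
  shows "carinena_H n N (x * sqrt N) = (-1) ^ n * poly (rodrigues_poly 1 (real n - N - 1/2) n) x / sqrt N ^ n"
  using poly_rodrigues_poly_rescale[of "1 / N" "sqrt N" "real n - N - 1/2" n x] assms
  by (simp add: carinena_H_eq_rodrigues_poly mult.commute)

lemma carinena_C_eq_rodrigues_poly: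
  assumes "0 < 1 - y^2 / \<nu>"
  shows "carinena_C n \<nu> y = (-1) ^ n * poly (rodrigues_poly (-1 / \<nu>) (real n + \<nu> - 1/2) n) y"
proof -
  define c where "c = -1 / \<nu>"
  define a where "a = real n + \<nu> - 1/2"
  define S where "S = {t::real. 0 < 1 + c * t^2}"
  have S: "open S"
    unfolding S_def by (rule open_Collect_less) (auto intro!: continuous_intros)
  have quadratic: "1 - t^2 / \<nu> = 1 + c * t^2" for t
    by (simp add: c_def)
  define u where "u = 1 + c * y^2"
  have "u > 0"
    using assms by (simp add: u_def quadratic[symmetric])
  then have "u powr (1/2 - \<nu>) * u powr (a - real n) = 1"
    by (simp add: a_def flip: powr_add)
  moreover have "(deriv ^^ n) (\<lambda>t. (1 + c * t^2) powr a) y = poly (rodrigues_poly c a n) y * u powr (a - real n)"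
    using \<open>u > 0\<close> unfolding u_def by (intro higher_deriv_powr_quadratic[OF S]) (simp_all add: S_def)
  ultimately show ?thesis
    unfolding carinena_C_def quadratic a_def[symmetric] c_def[symmetric] by (simp add: u_def)
qed

lemma poly_eq_if_infinite_agreement:
  fixes p q :: "'a::idom poly"
  assumes "infinite {x. poly p x = poly q x}"
  shows "p = q"
proof (rule ccontr)
  assume "p \<noteq> q"
  then have "finite {x. poly (p - q) x = 0}"
    by (intro poly_roots_finite) simp
  with assms show False
    by simp
qed

lemma carinena_C_poly_eq_rodrigues_poly:
  assumes "\<nu> \<noteq> 0"
  shows "carinena_C_poly n \<nu> = smult ((-1) ^ n) (rodrigues_poly (-1 / \<nu>) (real n + \<nu> - 1/2) n)"
  unfolding carinena_C_poly_def
proof (rule the_equality)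
  show "\<forall>y. 0 < 1 - y^2 / \<nu> \<longrightarrow> poly (smult ((-1) ^ n) (rodrigues_poly (-1 / \<nu>) (real n + \<nu> - 1/2) n)) y
      = carinena_C n \<nu> y"
    by (simp add: carinena_C_eq_rodrigues_poly)
next
  fix p
  assume p: "\<forall>y. 0 < 1 - y^2 / \<nu> \<longrightarrow> poly p y = carinena_C n \<nu> y"
  define b where "b = sqrt \<bar>\<nu>\<bar>"
  have b: "b > 0"
    using assms by (simp add: b_def)
  have "{0<..<b} \<subseteq> {y. 0 < 1 - y^2 / \<nu>}"
  proof
    fix y
    assume "y \<in> {0<..<b}"
    then have "y^2 < \<bar>\<nu>\<bar>"
      using power_strict_mono[of y b 2] by (simp add: b_def)
    then show "y \<in> {y. 0 < 1 - y^2 / \<nu>}"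
    proof (cases "\<nu> > 0")
      case False
      then have "y^2 / \<nu> \<le> 0"
        by (simp add: divide_nonneg_nonpos)
      then show ?thesis
        by simp
    qed (simp add: field_simps)
  qed
  also have "\<dots> \<subseteq> {y. poly p y = poly (smult ((-1) ^ n) (rodrigues_poly (-1 / \<nu>) (real n + \<nu> - 1/2) n)) y}"
    using p carinena_C_eq_rodrigues_poly by fastforce
  finally have "infinite {y. poly p y = poly (smult ((-1) ^ n) (rodrigues_poly (-1 / \<nu>) (real n + \<nu> - 1/2) n)) y}"
    using b infinite_Ioo infinite_super by blast
  then show "p = smult ((-1) ^ n) (rodrigues_poly (-1 / \<nu>) (real n + \<nu> - 1/2) n)"
    by (rule poly_eq_if_infinite_agreement)
qed

lemma poly_carinena_C_poly_rescaled:
  assumes "\<nu> \<noteq> 0"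
  shows "poly (map_poly complex_of_real (carinena_C_poly n \<nu>)) (csqrt (complex_of_real \<nu>) * complex_of_real y)
    = (-1) ^ n * complex_of_real (poly (rodrigues_poly (-1) (real n + \<nu> - 1/2) n) y)
        / csqrt (complex_of_real \<nu>) ^ n"
proof -
  interpret of_real: idom_hom "of_real :: real \<Rightarrow> complex"
    by (rule idom_hom_of_real)
  define s where "s = csqrt (complex_of_real \<nu>)"
  define a where "a = real n + \<nu> - 1/2"
  have s: "s \<noteq> 0" "complex_of_real (-1 / \<nu>) * s^2 = -1"
    using assms by (simp_all add: s_def)
  have "complex_of_real (poly (rodrigues_poly (-1) a n) y)
      = poly (rodrigues_poly (complex_of_real (-1 / \<nu>) * s^2) (complex_of_real a) n) (complex_of_real y)"
    using of_real.poly_map_poly[of "rodrigues_poly (-1) a n" y]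
    by (simp only: of_real.map_poly_rodrigues_poly s(2) of_real_minus of_real_1)
  also have "\<dots> = s ^ n * poly (rodrigues_poly (complex_of_real (-1 / \<nu>)) (complex_of_real a) n) (s * complex_of_real y)"
    by (rule poly_rodrigues_poly_rescale)
  finally have "poly (rodrigues_poly (complex_of_real (-1 / \<nu>)) (complex_of_real a) n) (s * complex_of_real y)
      = complex_of_real (poly (rodrigues_poly (-1) a n) y) / s ^ n"
    using s(1) by (simp add: field_simps)
  moreover have "map_poly complex_of_real (carinena_C_poly n \<nu>)
      = smult ((-1) ^ n) (rodrigues_poly (complex_of_real (-1 / \<nu>)) (complex_of_real a) n)"
    unfolding carinena_C_poly_eq_rodrigues_poly[OF assms] a_def[symmetric]
    by (simp add: map_poly_smult of_real.map_poly_rodrigues_poly)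
  ultimately show ?thesis
    by (simp add: a_def s_def)
qed

lemma carinena_H_rescaled_eq_homog:
  fixes N \<nu> :: real
  assumes "N > 0" and "\<nu> = N + 1/2 - real n" and "pochhammer (\<nu> + 1/2) n \<noteq> 0"
  shows "carinena_H n N (x * sqrt N) = (-1) ^ n * (carinena_alpha n \<nu> * fact n)
    * sqrt (1 + x^2) ^ n * poly (rodrigues_poly (-1) N n) (x / sqrt (1 + x^2)) / sqrt N ^ n"
proof -
  have \<nu>: "N + 1 - real n = \<nu> + 1/2" "2 * N + 1 - 2 * real n = 2 * \<nu>"
    using assms(2) by simp_all
  have "2 ^ n * pochhammer (\<nu> + 1/2) n * poly (rodrigues_poly 1 (real n - N - 1/2) n) x
      = pochhammer (2 * \<nu>) n * sqrt (1 + x^2) ^ n * poly (rodrigues_poly (-1) N n) (x / sqrt (1 + x^2))"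
    using arg_cong[OF rodrigues_poly_diagonal_eq_homog_real[of n N, unfolded \<nu>], of "\<lambda>p. poly p x"]
    by (simp add: poly_homog_rodrigues_poly)
  then have "poly (rodrigues_poly 1 (real n - N - 1/2) n) x = carinena_alpha n \<nu> * fact n
      * sqrt (1 + x^2) ^ n * poly (rodrigues_poly (-1) N n) (x / sqrt (1 + x^2))"
    using assms(3) by (simp add: carinena_alpha_def field_simps)
  then show ?thesis
    by (simp add: carinena_H_rescaled[OF assms(1)])
qed

theorem theorem3:
  fixes N \<nu> X :: real and n :: nat
  assumes "N > 0"
    and "\<nu> = N + 1/2 - real n"
    and "\<nu> \<noteq> 0"
    and "pochhammer (\<nu> + 1/2) n \<noteq> 0"
  shows "complex_of_real (carinena_H n N (X * sqrt N)) =
     complex_of_real (carinena_alpha n \<nu> * fact n)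
     * csqrt (complex_of_real (\<nu> / N)) ^ n
     * complex_of_real ((1 + X\<^sup>2) powr (real n / 2))
     * poly (map_poly complex_of_real (carinena_C_poly n \<nu>))
         (complex_of_real X * csqrt (complex_of_real \<nu>) / complex_of_real (sqrt (1 + X\<^sup>2)))"
proof -
  define r where "r = sqrt (1 + X^2)"
  define s where "s = csqrt (complex_of_real \<nu>)"
  define K where "K = poly (rodrigues_poly (-1) N n) (X / r)"
  define A where "A = carinena_alpha n \<nu> * fact n"
  have H: "carinena_H n N (X * sqrt N) = (-1) ^ n * A * r ^ n * K / sqrt N ^ n"
    using carinena_H_rescaled_eq_homog[OF assms(1,2,4)] by (simp add: A_def K_def r_def)
  have C: "poly (map_poly complex_of_real (carinena_C_poly n \<nu>)) (complex_of_real X * s / complex_of_real r)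
      = (-1) ^ n * complex_of_real K / s ^ n"
    using poly_carinena_C_poly_rescaled[OF assms(3), of n "X / r"] assms(2)
    by (simp add: K_def s_def mult.commute)
  have sqrt_quotient: "csqrt (complex_of_real (\<nu> / N)) = s / complex_of_real (sqrt N)"
    unfolding s_def of_real_divide[symmetric] csqrt_of_real'
    using assms(1) by (simp add: real_sqrt_divide abs_div zero_le_divide_iff)
  have powr: "(1 + X^2) powr (real n / 2) = r ^ n"
    by (simp add: r_def powr_half_sqrt_powr powr_realpow real_sqrt_power add_pos_nonneg)
  have "s \<noteq> 0" "sqrt N \<noteq> 0"
    using assms(1,3) by (simp_all add: s_def)
  then have "complex_of_real ((-1) ^ n * A * r ^ n * K / sqrt N ^ n)
      = complex_of_real A * (s / complex_of_real (sqrt N)) ^ n * complex_of_real (r ^ n)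
        * ((-1) ^ n * complex_of_real K / s ^ n)"
    by (simp add: power_divide field_simps)
  then show ?thesis
    unfolding s_def[symmetric] r_def[symmetric] A_def[symmetric] H C sqrt_quotient powr .
qed

end
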